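(* There is an absolute constant $C_2$ such that for all $p\in(0,0.1)$, with $q=-\log(1-p)$ and $B=\lfloor q^{-1}\log q^{-1}\rfloor$, we have $B\,g(Bq/2)\le C_2\log q^{-1}$.
   Context: $\beta(u)=\frac{u+\sqrt{u(4-3u)}}{2}$ and $g(z)=-\log\beta(1-e^{-z})$ for $z>0$. *)

theory Defs
  imports "HOL-Analysis.Analysis"
begin

definition beta_fn :: "real \<Rightarrow> real" where
  "beta_fn u = (u + sqrt (u * (4 - 3 * u))) / 2"

definition g_fn :: "real \<Rightarrow> real" where
  "g_fn z = - ln (beta_fn (1 - exp (- z)))"

end

theory Submission
  imports Defs
begin

text \<open>Since B \<ge> (1/q) log (1/q) - 1, we have exp(-Bq) \<le> e q. Since
  \<beta>(1 - t) \<ge> 1 - t^2 on [0, 1], also g(z) \<le> 2 exp(-2z) once exp(-2z) \<le> 1/2.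
  Hence g(Bq/2) \<le> 2e q and B g(Bq/2) \<le> 2e Bq \<le> 2e log (1/q).\<close>

lemma beta_fn_one_minus_ge:
  fixes e :: real
  assumes "0 \<le> e" "e \<le> 1"
  shows "1 - e\<^sup>2 \<le> beta_fn (1 - e)"
proof -
  have "1 + e - 2 * e\<^sup>2 \<le> sqrt ((1 - e) * (4 - 3 * (1 - e)))"
  proof (cases "1 + e - 2 * e\<^sup>2 \<le> 0")
    case True
    have "0 \<le> (1 - e) * (4 - 3 * (1 - e))" using assms by simp
    then have "0 \<le> sqrt ((1 - e) * (4 - 3 * (1 - e)))" by (rule real_sqrt_ge_zero)
    then show ?thesis using True by linarith
  next
    case False
    have "e ^ 4 \<le> e ^ 3" using power_decreasing[of 3 4 e] assms by simp
    moreover have "(1 + e - 2 * e\<^sup>2)\<^sup>2 = (1 - e) * (4 - 3 * (1 - e)) - 4 * e ^ 3 + 4 * e ^ 4"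
      by (simp add: power2_eq_square power3_eq_cube power4_eq_xxxx algebra_simps)
    ultimately have "(1 + e - 2 * e\<^sup>2)\<^sup>2 \<le> (1 - e) * (4 - 3 * (1 - e))" by linarith
    then show ?thesis using False by (simp add: real_le_rsqrt)
  qed
  then show ?thesis unfolding beta_fn_def by (simp add: power2_eq_square)
qed

lemma g_fn_le_exp:
  fixes z :: real
  assumes "0 \<le> z" "exp (- 2 * z) \<le> 1 / 2"
  shows "g_fn z \<le> 2 * exp (- 2 * z)"
proof -
  define e where "e = exp (- z)"
  have e_bounds: "0 \<le> e" "e \<le> 1" using assms(1) by (auto simp: e_def)
  have e_sq: "e\<^sup>2 = exp (- 2 * z)"
    unfolding e_def by (simp add: power2_eq_square exp_add[symmetric])
  have e_sq_lt: "0 < 1 - e\<^sup>2" using e_sq assms(2) by linarith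
  have "- e\<^sup>2 - 2 * (e\<^sup>2)\<^sup>2 \<le> ln (1 - e\<^sup>2)"
    using ln_one_minus_pos_lower_bound[of "e\<^sup>2"] e_sq assms(2) by auto
  also have "\<dots> \<le> ln (beta_fn (1 - e))"
    using beta_fn_one_minus_ge[OF e_bounds] e_sq_lt by simp
  finally have "- ln (beta_fn (1 - e)) \<le> e\<^sup>2 + 2 * (e\<^sup>2)\<^sup>2" by simp
  moreover have "(e\<^sup>2)\<^sup>2 \<le> e\<^sup>2 / 2"
    unfolding power2_eq_square[of "e\<^sup>2"] using e_sq assms(2) by (simp add: mult_left_mono)
  ultimately show ?thesis unfolding g_fn_def e_def[symmetric] e_sq[symmetric] by linarith
qed

lemma minus_ln_one_minus_le:
  fixes p :: real
  assumes "0 \<le> p" "p < 1"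
  shows "- ln (1 - p) \<le> p / (1 - p)"
proof -
  have "ln (1 / (1 - p)) \<le> 1 / (1 - p) - 1" using assms by (intro ln_le_minus_one) auto
  then show ?thesis using assms by (simp add: ln_div field_simps)
qed

lemma exp_minus_floor_log_ratio_le:
  fixes q :: real
  assumes "0 < q" "q \<le> 1"
  shows "exp (- (real_of_int \<lfloor>(1 / q) * ln (1 / q)\<rfloor> * q)) \<le> exp 1 * q"
proof -
  let ?B = "real_of_int \<lfloor>(1 / q) * ln (1 / q)\<rfloor>"
  have "(1 / q) * ln (1 / q) - 1 \<le> ?B" using floor_correct[of "(1 / q) * ln (1 / q)"] by simp
  then have "ln (1 / q) - q \<le> ?B * q" using assms(1) by (simp add: field_simps)
  then have "exp (- (?B * q)) \<le> exp (q - ln (1 / q))" by simp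
  also have "\<dots> = exp q * q" using assms(1) by (simp add: exp_diff)
  also have "\<dots> \<le> exp 1 * q" using assms by simp
  finally show ?thesis .
qed

theorem lemma10:
  shows "\<exists>C2::real. \<forall>p::real. 0 < p \<and> p < 0.1 \<longrightarrow>
     (let q = - ln (1 - p);
          B = real_of_int \<lfloor>(1 / q) * ln (1 / q)\<rfloor>
      in B * g_fn (B * q / 2) \<le> C2 * ln (1 / q))"
proof (intro exI allI impI)
  fix p :: real
  assume p: "0 < p \<and> p < 0.1"
  define q where "q = - ln (1 - p)"
  define B where "B = real_of_int \<lfloor>(1 / q) * ln (1 / q)\<rfloor>"
  have q_pos: "0 < q" using p by (simp add: q_def)
  have "q \<le> p / (1 - p)" using minus_ln_one_minus_le[of p] p unfolding q_def by simp
  also have "\<dots> \<le> 1 / 9" using p by (simp add: field_simps)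
  finally have "q \<le> 1 / 9" .
  then have "B \<ge> 0" "B \<le> ln (1 / q) / q" using q_pos by (auto simp: B_def)
  have "exp (- 2 * (B * q / 2)) \<le> exp 1 * q"
    unfolding B_def using exp_minus_floor_log_ratio_le q_pos \<open>q \<le> 1 / 9\<close> by simp
  moreover have "exp 1 * q \<le> 3 * (1 / 9)"
    using \<open>q \<le> 1 / 9\<close> exp_le q_pos by (intro mult_mono) auto
  ultimately have "g_fn (B * q / 2) \<le> 2 * exp 1 * q"
    using g_fn_le_exp[of "B * q / 2"] \<open>B \<ge> 0\<close> q_pos by force
  then have "B * g_fn (B * q / 2) \<le> B * (2 * exp 1 * q)"
    using \<open>B \<ge> 0\<close> by (rule mult_left_mono)
  also have "\<dots> \<le> (ln (1 / q) / q) * (2 * exp 1 * q)"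
    using \<open>B \<le> ln (1 / q) / q\<close> q_pos by (intro mult_right_mono) auto
  also have "\<dots> = 2 * exp 1 * ln (1 / q)" using q_pos by simp
  finally show "let q = - ln (1 - p); B = real_of_int \<lfloor>(1 / q) * ln (1 / q)\<rfloor>
      in B * g_fn (B * q / 2) \<le> 2 * exp 1 * ln (1 / q)"
    unfolding Let_def q_def[symmetric] B_def[symmetric] .
qed

end
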